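(* Let $C=U_d\cdots U_1$ be a depth-$d$ circuit of nearest-neighbor two-qubit Clifford gates on $n$ qubits located at the sites of a $D$-dimensional lattice, with $C_t=U_t\cdots U_1$. Let $b$ be a random error configuration in which each of the $nd$ noise locations $(i,t)$ (qubit $i$, after layer $t$) is independently selected with probability $\gamma$, and let $M_b$ be the set of Pauli operators $C_t^\dagger X_iC_t$, $C_t^\dagger Z_iC_t$ over selected locations $(i,t)$. Define $\Pi_{M_b}=\bigcirc_{P\in M_b}\Pi_P$ where $\Pi_P(\sigma)=\frac12\sigma+\frac12P\sigma P^\dagger$. Partition the lattice into hypercubic sublattices of side length $2d$, let $G$ be the graph on sublattices with adjacency including diagonal neighbors, and let $T_k$ be the set of phaseless Pauli operators whose support is contained within some connected set of $k$ sublattices of $G$ and meets at least $k/2$ sublattices within it. Then there exists a depth threshold $d^*_{local}\le O(\gamma^{-1}3^{2D}+\gamma^{-1}D\log(\gamma^{-1}D))$ such that for $d>d^*_{local}$, $$\mathbf P_b\Big(\bigcup_{s\in T_k}\{\Pi_{M_b}(s)\neq0\}\Big)\le nd\,e^{-k}.$$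
   Context: For a phaseless Pauli $s$, $\Pi_{M_b}(s)=s$ if $s$ commutes with every element of $M_b$ and $\Pi_{M_b}(s)=0$ otherwise. The support of a Pauli operator is the set of qubits on which it acts non-trivially. *)

theory Defs
  imports Complex_Main
begin

type_synonym site = "nat list"

text \<open>The D-dimensional lattice with side L (open boundary); n = L^D qubits.\<close>
definition box :: "nat \<Rightarrow> nat \<Rightarrow> site set" where
  "box D L = {v. length v = D \<and> (\<forall>j<D. v ! j < L)}"

definition nn :: "site \<Rightarrow> site \<Rightarrow> bool" where
  "nn u v \<longleftrightarrow> length u = length v \<and>
     (\<exists>j<length u. (u ! j = Suc (v ! j) \<or> v ! j = Suc (u ! j)) \<and>
                   (\<forall>i<length u. i \<noteq> j \<longrightarrow> u ! i = v ! i))"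

text \<open>A single-qubit phaseless Pauli is (x-bit, z-bit): I=(F,F), X=(T,F), Z=(F,T), Y=(T,T).\<close>
type_synonym p1 = "bool \<times> bool"
type_synonym p2 = "p1 \<times> p1"
type_synonym pauli = "site \<Rightarrow> p1"

definition pauli_on :: "site set \<Rightarrow> pauli \<Rightarrow> bool" where
  "pauli_on V s \<longleftrightarrow> (\<forall>v. v \<notin> V \<longrightarrow> s v = (False, False))"

definition supp :: "pauli \<Rightarrow> site set" where
  "supp s = {v. s v \<noteq> (False, False)}"

definition anticomm1 :: "p1 \<Rightarrow> p1 \<Rightarrow> bool" where
  "anticomm1 p q \<longleftrightarrow> (fst p \<and> snd q) \<noteq> (snd p \<and> fst q)"

definition commute :: "site set \<Rightarrow> pauli \<Rightarrow> pauli \<Rightarrow> bool" where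
  "commute V s p \<longleftrightarrow> even (card {v\<in>V. anticomm1 (s v) (p v)})"

definition pX :: "site \<Rightarrow> pauli" where
  "pX i = (\<lambda>v. if v = i then (True, False) else (False, False))"

definition pZ :: "site \<Rightarrow> pauli" where
  "pZ i = (\<lambda>v. if v = i then (False, True) else (False, False))"

definition add1 :: "p1 \<Rightarrow> p1 \<Rightarrow> p1" where
  "add1 p q = (fst p \<noteq> fst q, snd p \<noteq> snd q)"

definition add2 :: "p2 \<Rightarrow> p2 \<Rightarrow> p2" where
  "add2 p q = (add1 (fst p) (fst q), add1 (snd p) (snd q))"

definition anticomm2 :: "p2 \<Rightarrow> p2 \<Rightarrow> bool" where
  "anticomm2 p q \<longleftrightarrow> anticomm1 (fst p) (fst q) \<noteq> anticomm1 (snd p) (snd q)"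

text \<open>g represents the map P to U^dag P U (up to phase) of a two-qubit Clifford U;
  these are exactly the symplectic linear bijections of F2^4.\<close>
definition clifford2 :: "(p2 \<Rightarrow> p2) \<Rightarrow> bool" where
  "clifford2 g \<longleftrightarrow> bij g \<and> (\<forall>p q. g (add2 p q) = add2 (g p) (g q))
                   \<and> (\<forall>p q. anticomm2 (g p) (g q) = anticomm2 p q)"

type_synonym gate = "site \<times> site \<times> (p2 \<Rightarrow> p2)"
type_synonym layer = "gate list"

definition apply_gate :: "gate \<Rightarrow> pauli \<Rightarrow> pauli" where
  "apply_gate gt s = (case gt of (a, b, g) \<Rightarrow>
      (let r = g (s a, s b) in s(a := fst r, b := snd r)))"

definition heis_layer :: "layer \<Rightarrow> pauli \<Rightarrow> pauli" where
  "heis_layer l s = fold apply_gate l s"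

definition valid_layer :: "site set \<Rightarrow> layer \<Rightarrow> bool" where
  "valid_layer V l \<longleftrightarrow> distinct (concat (map (\<lambda>(a, b, g). [a, b]) l)) \<and>
     (\<forall>(a, b, g) \<in> set l. a \<in> V \<and> b \<in> V \<and> nn a b \<and> clifford2 g)"

definition valid_circuit :: "site set \<Rightarrow> nat \<Rightarrow> (nat \<Rightarrow> layer) \<Rightarrow> bool" where
  "valid_circuit V d U \<longleftrightarrow> (\<forall>t\<in>{1..d}. valid_layer V (U t))"

text \<open>heis U t P = C_t^dag P C_t with C_t = U_t \<dots> U_1 (phaseless).\<close>
fun heis :: "(nat \<Rightarrow> layer) \<Rightarrow> nat \<Rightarrow> pauli \<Rightarrow> pauli" where
  "heis U 0 P = P"
| "heis U (Suc t) P = heis U t (heis_layer (U (Suc t)) P)"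

definition Mset :: "(nat \<Rightarrow> layer) \<Rightarrow> (site \<times> nat) set \<Rightarrow> pauli set" where
  "Mset U B = {heis U t (pX i) | i t. (i, t) \<in> B} \<union> {heis U t (pZ i) | i t. (i, t) \<in> B}"

text \<open>Pi_M(s) for a phaseless Pauli s: s if s commutes with all of M, else 0 (None).\<close>
definition Pi_M :: "site set \<Rightarrow> pauli set \<Rightarrow> pauli \<Rightarrow> pauli option" where
  "Pi_M V M s = (if \<forall>P\<in>M. commute V s P then Some s else None)"

definition locs :: "site set \<Rightarrow> nat \<Rightarrow> (site \<times> nat) set" where
  "locs V d = V \<times> {1..d}"

text \<open>Probability of event E when each location is independently selected with prob. gamma.\<close>
definition noise_prob :: "real \<Rightarrow> site set \<Rightarrow> nat \<Rightarrow> ((site \<times> nat) set \<Rightarrow> bool) \<Rightarrow> real" where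
  "noise_prob \<gamma> V d E = (\<Sum>B\<in>{B. B \<subseteq> locs V d \<and> E B}.
       \<gamma> ^ card B * (1 - \<gamma>) ^ (card (locs V d) - card B))"

definition sub :: "nat \<Rightarrow> site \<Rightarrow> nat list" where
  "sub d v = map (\<lambda>x. x div (2 * d)) v"

definition cube :: "site set \<Rightarrow> nat \<Rightarrow> nat list \<Rightarrow> site set" where
  "cube V d c = {v\<in>V. sub d v = c}"

definition adjG :: "nat list \<Rightarrow> nat list \<Rightarrow> bool" where
  "adjG c c' \<longleftrightarrow> c \<noteq> c' \<and> length c = length c' \<and>
     (\<forall>j<length c. \<bar>int (c ! j) - int (c' ! j)\<bar> \<le> 1)"

definition connected_subs :: "site set \<Rightarrow> nat \<Rightarrow> nat list set \<Rightarrow> bool" where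
  "connected_subs V d S \<longleftrightarrow> S \<subseteq> sub d ` V \<and>
     (\<forall>x\<in>S. \<forall>y\<in>S. (x, y) \<in> {(a, b). a \<in> S \<and> b \<in> S \<and> adjG a b}\<^sup>*)"

definition T_set :: "site set \<Rightarrow> nat \<Rightarrow> nat \<Rightarrow> pauli set" where
  "T_set V d k = {s. pauli_on V s \<and>
     (\<exists>S. connected_subs V d S \<and> card S = k \<and> supp s \<subseteq> \<Union> (cube V d ` S) \<and>
          real (card {c\<in>S. supp s \<inter> cube V d c \<noteq> {}}) \<ge> real k / 2)}"

end

theory Submission
  imports Defs
begin

(* Suppose a Pauli s survives the projection Pi_{M_b}. If a location (i, t) is selected, then
   s commutes with C_t^dag X_i C_t and C_t^dag Z_i C_t, i.e. the propagated operator C_t s C_t^dag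
   acts trivially on qubit i. So b must avoid all pairs (i, t) with i in the support of
   C_t s C_t^dag, which happens with probability at most
   (1 - gamma)^(d min_t |supp C_t s C_t^dag|) <= sum_t x^|supp C_t s C_t^dag|, x = (1 - gamma)^d.
   By the light cone of a depth-d nearest-neighbour circuit, for s in T_k supported on a connected
   set S of k sublattices, C_t s C_t^dag lives in the (at most k (6d)^D) sites next to S, and it has
   at least k / (2 3^D) non-trivial sites, because each sublattice met by s is adjacent to the
   sublattice of one of them. As s -> C_t s C_t^dag is injective, tilting the generating function
   sum_{s on R} y^|supp s| = (1 + 3y)^|R| by phi^(2 3^D |supp s| - k) bounds the sum over s
   by (1 + 3 x phi^(2 3^D))^(k (6d)^D) / phi^k. Connected sets of k sublattices are traced by
   walks of length 2(k - 1) in the adjacency graph, so there are at most n 9^(D(k-1)) of them.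
   Once gamma d dominates 3^(2D) and D log(6d), choosing phi = e^(2 + 4D) makes the total at most
   n d e^(-k). *)

section \<open>Lattice geometry\<close>

lemma coordinatewise_lists_card_le:
  fixes A :: "nat \<Rightarrow> 'a set"
  assumes "\<And>j. j < D \<Longrightarrow> finite (A j) \<and> card (A j) \<le> m"
  shows "finite {v. length v = D \<and> (\<forall>j<D. v ! j \<in> A j)} \<and>
         card {v. length v = D \<and> (\<forall>j<D. v ! j \<in> A j)} \<le> m ^ D"
  using assms
proof (induction D arbitrary: A)
  case 0
  have "{v::'a list. length v = 0 \<and> (\<forall>j<0. v ! j \<in> A j)} = {[]}" by auto
  then show ?case by simp
next
  case (Suc D)
  let ?B = "{v. length v = D \<and> (\<forall>j<D. v ! j \<in> A (Suc j))}"
  have IH: "finite ?B \<and> card ?B \<le> m ^ D"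
    using Suc.IH[of "\<lambda>j. A (Suc j)"] Suc.prems by auto
  have eq: "{v. length v = Suc D \<and> (\<forall>j<Suc D. v ! j \<in> A j)} = (\<lambda>(x, v). x # v) ` (A 0 \<times> ?B)"
  proof (intro set_eqI iffI)
    fix v assume "v \<in> {v. length v = Suc D \<and> (\<forall>j<Suc D. v ! j \<in> A j)}"
    then obtain x w where v: "v = x # w" "length w = D" and h: "\<forall>j<Suc D. v ! j \<in> A j"
      by (cases v) auto
    have "\<forall>j<D. w ! j \<in> A (Suc j)"
      using h v by (metis Suc_less_eq nth_Cons_Suc)
    moreover have "x \<in> A 0" using h v by auto
    ultimately show "v \<in> (\<lambda>(x, v). x # v) ` (A 0 \<times> ?B)" using h v by auto
  next
    fix v assume "v \<in> (\<lambda>(x, v). x # v) ` (A 0 \<times> ?B)"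
    then show "v \<in> {v. length v = Suc D \<and> (\<forall>j<Suc D. v ! j \<in> A j)}"
      by (auto simp: less_Suc_eq_0_disj)
  qed
  have A0: "finite (A 0)" "card (A 0) \<le> m" using Suc.prems by auto
  have "card ((\<lambda>(x, v). x # v) ` (A 0 \<times> ?B)) \<le> card (A 0) * card ?B"
    using IH A0 card_image_le[of "A 0 \<times> ?B"] by (simp add: card_cartesian_product)
  also have "\<dots> \<le> m * m ^ D" using IH A0 by (intro mult_mono) auto
  finally show ?case unfolding eq using IH A0 by auto
qed

lemma finite_box: "finite (box D L)"
  using coordinatewise_lists_card_le[of D "\<lambda>_. {..<L}" L] by (simp add: box_def)

lemma length_box: "v \<in> box D L \<Longrightarrow> length v = D"
  by (simp add: box_def)

lemma card_box_pos:
  assumes "1 \<le> L" shows "1 \<le> card (box D L)"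
proof -
  have "replicate D 0 \<in> box D L" using assms by (simp add: box_def)
  then have "box D L \<noteq> {}" by blast
  then show ?thesis using finite_box[of D L] by (simp add: Suc_le_eq card_gt_0_iff)
qed

definition cheb_close :: "nat \<Rightarrow> nat list \<Rightarrow> nat list \<Rightarrow> bool" where
  "cheb_close r u v \<longleftrightarrow> length u = length v \<and> (\<forall>j<length u. \<bar>int (u ! j) - int (v ! j)\<bar> \<le> int r)"

definition nbhd :: "nat \<Rightarrow> site set \<Rightarrow> site set" where
  "nbhd r A = {v. \<exists>u\<in>A. cheb_close r u v}"

lemma cheb_close_refl: "cheb_close r u u"
  by (simp add: cheb_close_def)

lemma cheb_close_sym: "cheb_close r u v \<Longrightarrow> cheb_close r v u"
  by (auto simp: cheb_close_def abs_minus_commute)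

lemma cheb_close_trans: "cheb_close r u v \<Longrightarrow> cheb_close r' v w \<Longrightarrow> cheb_close (r + r') u w"
  unfolding cheb_close_def by (smt (verit) of_nat_add)

lemma cheb_close_mono: "cheb_close r u v \<Longrightarrow> r \<le> r' \<Longrightarrow> cheb_close r' u v"
  unfolding cheb_close_def by force

lemma nn_imp_cheb_close:
  assumes "nn u v" shows "cheb_close 1 u v"
proof -
  obtain j where len: "length u = length v"
    and j: "u ! j = Suc (v ! j) \<or> v ! j = Suc (u ! j)"
    and rest: "\<forall>i<length u. i \<noteq> j \<longrightarrow> u ! i = v ! i"
    using assms unfolding nn_def by blast
  have "\<bar>int (u ! i) - int (v ! i)\<bar> \<le> 1" if "i < length u" for i
    using j rest that by (cases "i = j") auto
  then show ?thesis using len by (simp add: cheb_close_def)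
qed

lemma nn_neq: "nn u v \<Longrightarrow> u \<noteq> v"
  unfolding nn_def by auto

lemma adjG_imp_cheb_close: "adjG c c' \<Longrightarrow> cheb_close 1 c c'"
  by (simp add: adjG_def cheb_close_def)

lemma nbhd_mono: "A \<subseteq> B \<Longrightarrow> nbhd r A \<subseteq> nbhd r B"
  unfolding nbhd_def by auto

lemma subset_nbhd: "A \<subseteq> nbhd r A"
  unfolding nbhd_def using cheb_close_refl by auto

lemma nbhd_nbhd: "nbhd r (nbhd r' A) \<subseteq> nbhd (r' + r) A"
  unfolding nbhd_def using cheb_close_trans by blast

lemma card_cheb_close_1_le: "finite {c'. cheb_close 1 c c'} \<and> card {c'. cheb_close 1 c c'} \<le> 3 ^ length c"
proof -
  let ?A = "\<lambda>j. {c ! j - 1 .. c ! j + 1}"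
  have "{c'. cheb_close 1 c c'} \<subseteq> {v. length v = length c \<and> (\<forall>j<length c. v ! j \<in> ?A j)}"
    unfolding cheb_close_def by auto
  moreover have "finite {v. length v = length c \<and> (\<forall>j<length c. v ! j \<in> ?A j)} \<and>
     card {v. length v = length c \<and> (\<forall>j<length c. v ! j \<in> ?A j)} \<le> 3 ^ length c"
    by (rule coordinatewise_lists_card_le) auto
  ultimately show ?thesis by (meson card_mono finite_subset order_trans)
qed

lemma div_double_close:
  fixes a b d :: nat
  assumes "1 \<le> d" "\<bar>int a - int b\<bar> \<le> int d"
  shows "\<bar>int (a div (2 * d)) - int (b div (2 * d))\<bar> \<le> 1"
proof -
  have step: "y div (2 * d) \<le> x div (2 * d) + 1" if "y \<le> x + d" for x y :: nat
  proof -
    have "y div (2 * d) \<le> (x + 2 * d) div (2 * d)" using that by (intro div_le_mono) simp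
    also have "\<dots> = x div (2 * d) + 1" using assms(1) by simp
    finally show ?thesis .
  qed
  have "b \<le> a + d" "a \<le> b + d" using assms(2) by linarith+
  then show ?thesis using step[of b a] step[of a b] by linarith
qed

lemma cheb_close_sub:
  "1 \<le> d \<Longrightarrow> cheb_close d u v \<Longrightarrow> cheb_close 1 (sub d u) (sub d v)"
  unfolding cheb_close_def sub_def using div_double_close by auto

lemma card_near_cube_le:
  assumes "1 \<le> d" "length c = D"
  shows "finite {w\<in>box D L. cheb_close 1 c (sub d w)} \<and>
         card {w\<in>box D L. cheb_close 1 c (sub d w)} \<le> (6 * d) ^ D"
proof -
  let ?A = "\<lambda>j. {2 * d * c ! j - 2 * d ..< 2 * d * c ! j + 4 * d}"
  have "{w\<in>box D L. cheb_close 1 c (sub d w)} \<subseteq> {v. length v = D \<and> (\<forall>j<D. v ! j \<in> ?A j)}"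
  proof safe
    fix w assume w: "w \<in> box D L" "cheb_close 1 c (sub d w)"
    show lw: "length w = D" using w(1) by (rule length_box)
    fix j assume "j < D"
    then have "\<bar>int (c ! j) - int (w ! j div (2 * d))\<bar> \<le> 1"
      using w(2) assms lw unfolding cheb_close_def sub_def by auto
    then have h1: "w ! j div (2 * d) \<le> c ! j + 1" and h2: "c ! j \<le> w ! j div (2 * d) + 1"
      by linarith+
    have "w ! j mod (2 * d) < 2 * d" using assms(1) by simp
    then have "w ! j < 2 * d * (w ! j div (2 * d) + 1)"
      using div_mult_mod_eq[of "w ! j" "2 * d"] by (simp add: algebra_simps)
    also have "\<dots> \<le> 2 * d * (c ! j + 2)" using h1 by (intro mult_le_mono2) simp
    finally have "w ! j < 2 * d * c ! j + 4 * d" by (simp add: algebra_simps)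
    moreover have "2 * d * (w ! j div (2 * d)) \<le> w ! j"
      by (metis div_mult_mod_eq le_add1 mult.commute)
    moreover have "2 * d * c ! j \<le> 2 * d * (w ! j div (2 * d)) + 2 * d"
      using h2 by (metis add_mult_distrib2 mult.right_neutral mult_le_mono2)
    ultimately have "2 * d * c ! j - 2 * d \<le> w ! j" "w ! j < 2 * d * c ! j + 4 * d" by linarith+
    then show "w ! j \<in> ?A j" by simp
  qed
  moreover have "finite {v. length v = D \<and> (\<forall>j<D. v ! j \<in> ?A j)} \<and>
     card {v. length v = D \<and> (\<forall>j<D. v ! j \<in> ?A j)} \<le> (6 * d) ^ D"
    by (rule coordinatewise_lists_card_le) auto
  ultimately show ?thesis by (meson card_mono finite_subset order_trans)
qed

section \<open>Clifford circuits in the Heisenberg picture\<close>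

abbreviation I1 :: p1 where "I1 \<equiv> (False, False)"
abbreviation I2 :: p2 where "I2 \<equiv> (I1, I1)"

definition gate_inv :: "gate \<Rightarrow> gate" where
  "gate_inv x = (case x of (a, b, g) \<Rightarrow> (a, b, inv g))"

definition layer_inv :: "layer \<Rightarrow> layer" where
  "layer_inv l = rev (map gate_inv l)"

text \<open>The Schroedinger-picture propagation s \<mapsto> C_t s C_t^dag, inverse to heis U t.\<close>
fun schrod :: "(nat \<Rightarrow> layer) \<Rightarrow> nat \<Rightarrow> pauli \<Rightarrow> pauli" where
  "schrod U 0 s = s"
| "schrod U (Suc t) s = heis_layer (layer_inv (U (Suc t))) (schrod U t s)"

lemma apply_gate_inv:
  assumes "a \<noteq> b" "surj g"
  shows "apply_gate (a, b, g) (apply_gate (a, b, inv g) s) = s"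
proof -
  have "g (inv g (s a, s b)) = (s a, s b)" using assms(2) by (simp add: surj_f_inv_f)
  then show ?thesis using assms(1)
    by (auto simp: apply_gate_def Let_def fun_eq_iff split: prod.splits)
qed

lemma heis_layer_inv:
  assumes "\<forall>(a, b, g)\<in>set l. a \<noteq> b \<and> surj g"
  shows "heis_layer l (heis_layer (layer_inv l) s) = s"
  using assms
proof (induction l arbitrary: s)
  case Nil
  then show ?case by (simp add: heis_layer_def layer_inv_def)
next
  case (Cons x xs)
  obtain a b g where x: "x = (a, b, g)" by (cases x) auto
  have ab: "a \<noteq> b" "surj g" using Cons.prems x by auto
  let ?s = "fold apply_gate (rev (map gate_inv xs)) s"
  have "heis_layer (x # xs) (heis_layer (layer_inv (x # xs)) s) =
        fold apply_gate xs (apply_gate x (apply_gate (gate_inv x) ?s))"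
    by (simp add: heis_layer_def layer_inv_def)
  also have "apply_gate x (apply_gate (gate_inv x) ?s) = ?s"
    using apply_gate_inv[OF ab] by (simp add: x gate_inv_def)
  also have "fold apply_gate xs ?s = s"
    using Cons.IH[of s] Cons.prems by (simp add: heis_layer_def layer_inv_def)
  finally show ?case .
qed

lemma clifford2_zero:
  assumes "clifford2 g" shows "g I2 = I2"
proof -
  have "add2 p p = I2" for p by (simp add: add2_def add1_def)
  moreover have "g (add2 p p) = add2 (g p) (g p)" for p using assms unfolding clifford2_def by blast
  ultimately show ?thesis by metis
qed

lemma clifford2_inv_zero:
  assumes "clifford2 g" shows "inv g I2 = I2"
proof -
  have "inj g" using assms by (simp add: clifford2_def bij_def)
  then show ?thesis using clifford2_zero[OF assms] by (metis inv_f_f)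
qed

lemma valid_layerD:
  assumes "valid_layer V l"
  shows "distinct (concat (map (\<lambda>(a, b, g). [a, b]) l))"
    and "\<forall>(a, b, g)\<in>set l. a \<in> V \<and> b \<in> V \<and> a \<noteq> b \<and> cheb_close 1 a b \<and> clifford2 g"
  using assms nn_imp_cheb_close nn_neq by (fastforce simp: valid_layer_def)+

lemma valid_layer_inv:
  assumes "valid_layer V l"
  shows "distinct (concat (map (\<lambda>(a, b, g). [a, b]) (layer_inv l)))"
    and "\<forall>(a, b, g)\<in>set (layer_inv l). a \<in> V \<and> b \<in> V \<and> cheb_close 1 a b \<and>
           g I2 = I2"
proof -
  have "map (\<lambda>(a, b, g). [a, b]) (layer_inv l) = rev (map (\<lambda>(a, b, g). [a, b]) l)"
    by (auto simp: layer_inv_def rev_map gate_inv_def)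
  then show "distinct (concat (map (\<lambda>(a, b, g). [a, b]) (layer_inv l)))"
    using valid_layerD(1)[OF assms] by simp
  show "\<forall>(a, b, g)\<in>set (layer_inv l). a \<in> V \<and> b \<in> V \<and> cheb_close 1 a b \<and>
          g I2 = I2"
    using valid_layerD(2)[OF assms] clifford2_inv_zero
    by (fastforce simp: layer_inv_def gate_inv_def)
qed

lemma heis_schrod:
  assumes "valid_circuit V d U" "t \<le> d"
  shows "heis U t (schrod U t s) = s"
  using assms
proof (induction t)
  case 0 then show ?case by simp
next
  case (Suc t)
  have "valid_layer V (U (Suc t))" using Suc.prems by (simp add: valid_circuit_def)
  then have "\<forall>(a, b, g)\<in>set (U (Suc t)). a \<noteq> b \<and> surj g"
    using valid_layerD(2) by (fastforce simp: clifford2_def bij_def)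
  then show ?case using Suc heis_layer_inv by simp
qed

lemma inj_schrod:
  assumes "valid_circuit V d U" "t \<le> d"
  shows "inj (schrod U t)"
  by (metis assms heis_schrod injI)

lemma pauli_on_heis_layer:
  assumes "\<forall>(a, b, g)\<in>set l. a \<in> V \<and> b \<in> V" "pauli_on V s"
  shows "pauli_on V (heis_layer l s)"
  using assms unfolding heis_layer_def
  by (induction l arbitrary: s) (auto simp: pauli_on_def apply_gate_def Let_def)

lemma pauli_on_schrod:
  assumes "valid_circuit V d U" "t \<le> d" "pauli_on V s"
  shows "pauli_on V (schrod U t s)"
  using assms
proof (induction t)
  case 0 then show ?case by simp
next
  case (Suc t)
  have "valid_layer V (U (Suc t))" using Suc.prems by (simp add: valid_circuit_def)
  then have "\<forall>(a, b, g)\<in>set (layer_inv (U (Suc t))). a \<in> V \<and> b \<in> V"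
    using valid_layer_inv(2) by fastforce
  then show ?case using Suc pauli_on_heis_layer by simp
qed

lemma commute_heis_layer:
  assumes "finite V"
    and "\<forall>(a, b, g)\<in>set l. a \<in> V \<and> b \<in> V \<and> a \<noteq> b \<and> clifford2 g"
  shows "commute V (heis_layer l s) (heis_layer l p) = commute V s p"
  using assms(2) unfolding heis_layer_def
proof (induction l arbitrary: s p)
  case Nil then show ?case by simp
next
  case (Cons x xs)
  obtain a b g where x: "x = (a, b, g)" by (cases x) auto
  have ab: "a \<in> V" "b \<in> V" "a \<noteq> b" and "clifford2 g" using Cons.prems x by auto
  then have g: "anticomm2 (g (s a, s b)) (g (p a, p b)) = anticomm2 (s a, s b) (p a, p b)"
    unfolding clifford2_def by blast
  let ?s' = "apply_gate x s" and ?p' = "apply_gate x p"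
  let ?Q = "\<lambda>s p v. anticomm1 (s v) (p v)"
  text \<open>Only the two qubits of the gate change, and there the parity of anticommuting
    positions is preserved by symplecticity.\<close>
  have split: "card {v\<in>V. ?Q s p v} = card {v\<in>V - {a, b}. ?Q s p v} +
      card {v\<in>{a, b}. ?Q s p v}" for s p
    using assms(1) ab by (subst card_Un_disjoint[symmetric]) (auto intro: arg_cong[where f = card])
  have pair: "card {v\<in>{a, b}. ?Q s p v} = of_bool (?Q s p a) + of_bool (?Q s p b)" for s p
  proof -
    have "{v\<in>{a, b}. ?Q s p v} = (if ?Q s p a then {a} else {}) \<union> (if ?Q s p b then {b} else {})"
      by auto
    then show ?thesis using ab(3) by simp
  qed
  have "{v\<in>V - {a, b}. ?Q ?s' ?p' v} = {v\<in>V - {a, b}. ?Q s p v}"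
    by (auto simp: x apply_gate_def Let_def)
  moreover have "(?Q ?s' ?p' a \<noteq> ?Q ?s' ?p' b) = (?Q s p a \<noteq> ?Q s p b)"
    using g ab(3) by (simp add: x apply_gate_def Let_def anticomm2_def split: prod.splits)
  ultimately have "commute V ?s' ?p' = commute V s p"
    unfolding commute_def using split[of ?s' ?p'] split[of s p] pair[of ?s' ?p'] pair[of s p]
    by (auto simp: of_bool_def split: if_splits)
  then show ?case using Cons by simp
qed

lemma commute_heis:
  assumes "finite V" "valid_circuit V d U" "t \<le> d"
  shows "commute V (heis U t a) (heis U t b) = commute V a b"
  using assms(2,3)
proof (induction t arbitrary: a b)
  case 0 then show ?case by simp
next
  case (Suc t)
  have "valid_layer V (U (Suc t))" using Suc.prems by (simp add: valid_circuit_def)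
  then have "\<forall>(a, b, g)\<in>set (U (Suc t)). a \<in> V \<and> b \<in> V \<and> a \<noteq> b \<and> clifford2 g"
    using valid_layerD(2) by fastforce
  then show ?case using Suc commute_heis_layer[OF assms(1)] by simp
qed

definition touched :: "layer \<Rightarrow> pauli \<Rightarrow> site set" where
  "touched l s = {v. \<exists>a b g. (a, b, g) \<in> set l \<and> (v = a \<or> v = b) \<and>
                             (s a \<noteq> I1 \<or> s b \<noteq> I1)}"

lemma supp_apply_gate:
  assumes "g I2 = I2"
  shows "supp (apply_gate (a, b, g) s) \<subseteq> supp s \<union> touched [(a, b, g)] s"
proof
  fix v assume v: "v \<in> supp (apply_gate (a, b, g) s)"
  show "v \<in> supp s \<union> touched [(a, b, g)] s"
  proof (cases "v = a \<or> v = b")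
    case True
    show ?thesis
    proof (cases "s a = I1 \<and> s b = I1")
      case True
      then have "apply_gate (a, b, g) s v = I1" using assms \<open>v = a \<or> v = b\<close>
        by (auto simp: apply_gate_def Let_def)
      then show ?thesis using v by (simp add: supp_def)
    next
      case False
      then show ?thesis using \<open>v = a \<or> v = b\<close> by (auto simp: touched_def)
    qed
  next
    case False
    then show ?thesis using v by (auto simp: supp_def apply_gate_def Let_def)
  qed
qed

lemma supp_fold_apply_gate:
  assumes "distinct (concat (map (\<lambda>(a, b, g). [a, b]) l))"
    and "\<forall>(a, b, g)\<in>set l. g I2 = I2"
  shows "supp (fold apply_gate l s) \<subseteq> supp s \<union> touched l s"
  using assms
proof (induction l arbitrary: s)
  case Nil then show ?case by simp
next
  case (Cons x xs)
  obtain a b g where x: "x = (a, b, g)" by (cases x) auto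
  let ?s1 = "apply_gate x s"
  let ?xs_sites = "set (concat (map (\<lambda>(a, b, g). [a, b]) xs))"
  have "distinct (concat (map (\<lambda>(a, b, g). [a, b]) xs))" and ab: "a \<notin> ?xs_sites" "b \<notin> ?xs_sites"
    using Cons.prems(1) x by auto
  then have IH: "supp (fold apply_gate xs ?s1) \<subseteq> supp ?s1 \<union> touched xs ?s1"
    using Cons.IH Cons.prems(2) by simp
  have g0: "g I2 = I2"
    using Cons.prems(2) x by auto
  have "supp ?s1 \<subseteq> supp s \<union> touched (x # xs) s"
    using supp_apply_gate[of g a b s, OF g0] x unfolding touched_def by auto
  moreover have "touched xs ?s1 \<subseteq> touched (x # xs) s"
  proof -
    text \<open>The gates of xs act on qubits disjoint from a and b.\<close>
    have "?s1 a' = s a' \<and> ?s1 b' = s b'" if "(a', b', g') \<in> set xs" for a' b' g'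
    proof -
      have "a' \<in> ?xs_sites" "b' \<in> ?xs_sites" using that by force+
      then have "a' \<noteq> a" "a' \<noteq> b" "b' \<noteq> a" "b' \<noteq> b" using ab by auto
      then show ?thesis by (simp add: x apply_gate_def Let_def)
    qed
    then show ?thesis unfolding touched_def by fastforce
  qed
  ultimately show ?case using IH by (simp add: x) blast
qed

lemma touched_subset_nbhd:
  assumes "\<forall>(a, b, g)\<in>set l. cheb_close 1 a b"
  shows "touched l s \<subseteq> nbhd 1 (supp s)"
  using assms cheb_close_sym cheb_close_refl
  unfolding touched_def nbhd_def supp_def by fastforce

lemma supp_heis_layer:
  assumes "distinct (concat (map (\<lambda>(a, b, g). [a, b]) l))"
    and "\<forall>(a, b, g)\<in>set l. cheb_close 1 a b \<and>
           g I2 = I2"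
  shows "supp (heis_layer l s) \<subseteq> nbhd 1 (supp s)"
proof -
  have "supp (heis_layer l s) \<subseteq> supp s \<union> touched l s"
    unfolding heis_layer_def using assms by (intro supp_fold_apply_gate) fastforce+
  moreover have "touched l s \<subseteq> nbhd 1 (supp s)"
    using assms(2) by (intro touched_subset_nbhd) fastforce
  ultimately show ?thesis using subset_nbhd by blast
qed

lemma supp_schrod:
  assumes "valid_circuit V d U" "t \<le> d"
  shows "supp (schrod U t s) \<subseteq> nbhd t (supp s)"
  using assms
proof (induction t)
  case 0 then show ?case using subset_nbhd by simp
next
  case (Suc t)
  have v: "valid_layer V (U (Suc t))" using Suc.prems by (simp add: valid_circuit_def)
  have "supp (schrod U (Suc t) s) \<subseteq> nbhd 1 (supp (schrod U t s))"
    unfolding schrod.simps using valid_layer_inv[OF v] by (intro supp_heis_layer) fastforce+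
  also have "\<dots> \<subseteq> nbhd 1 (nbhd t (supp s))" using Suc by (intro nbhd_mono) auto
  also have "\<dots> \<subseteq> nbhd (Suc t) (supp s)" using nbhd_nbhd[of 1 t] by simp
  finally show ?case .
qed

lemma supp_heis:
  assumes "valid_circuit V d U" "t \<le> d"
  shows "supp (heis U t s) \<subseteq> nbhd t (supp s)"
  using assms
proof (induction t arbitrary: s)
  case 0 then show ?case using subset_nbhd by simp
next
  case (Suc t)
  have v: "valid_layer V (U (Suc t))" using Suc.prems by (simp add: valid_circuit_def)
  have "supp (heis_layer (U (Suc t)) s) \<subseteq> nbhd 1 (supp s)"
    using valid_layerD[OF v] clifford2_zero by (intro supp_heis_layer) fastforce+
  then have "supp (heis U (Suc t) s) \<subseteq> nbhd t (nbhd 1 (supp s))"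
    using Suc nbhd_mono by (simp, blast)
  also have "\<dots> \<subseteq> nbhd (Suc t) (supp s)" using nbhd_nbhd[of t 1] by simp
  finally show ?case .
qed

section \<open>The noise distribution and Pauli weight enumeration\<close>

lemma sum_Pow_binomial:
  fixes a b :: real
  assumes "finite A"
  shows "(\<Sum>B\<in>Pow A. a ^ card B * b ^ (card A - card B)) = (a + b) ^ card A"
proof -
  have "(a + b) ^ card A = (\<Sum>X\<in>Pow A. (\<Prod>x\<in>X. a) * (\<Prod>x\<in>A - X. b))"
    using prod_add[OF assms, of "\<lambda>_. a" "\<lambda>_. b"] by simp
  also have "\<dots> = (\<Sum>B\<in>Pow A. a ^ card B * b ^ (card A - card B))"
    using assms by (intro sum.cong) (auto simp: card_Diff_subset finite_subset)
  finally show ?thesis by simp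
qed

lemma sum_UN_le_sum_sum:
  fixes f :: "'a \<Rightarrow> real"
  assumes "finite I" "\<forall>i\<in>I. finite (A i)" "\<forall>x. 0 \<le> f x"
  shows "sum f (\<Union>i\<in>I. A i) \<le> (\<Sum>i\<in>I. sum f (A i))"
  using assms
proof (induction I rule: finite_induct)
  case (insert i I)
  have fin: "finite (A i)" "finite (\<Union>j\<in>I. A j)" using insert.hyps(1) insert.prems(1) by auto
  have "0 \<le> sum f (A i \<inter> (\<Union>j\<in>I. A j))" using insert.prems(2) by (simp add: sum_nonneg)
  then have "sum f (A i \<union> (\<Union>j\<in>I. A j)) \<le> sum f (A i) + sum f (\<Union>j\<in>I. A j)"
    using sum_Un[OF fin, of f] by linarith
  then show ?case using insert by simp
qed simp

lemma finite_locs: "finite V \<Longrightarrow> finite (locs V d)"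
  by (simp add: locs_def)

lemma noise_prob_eq_sum_Pow:
  assumes "finite V"
  shows "noise_prob \<gamma> V d E = (\<Sum>B\<in>Pow (locs V d).
           if E B then \<gamma> ^ card B * (1 - \<gamma>) ^ (card (locs V d) - card B) else 0)"
proof -
  have "{B. B \<subseteq> locs V d \<and> E B} = {B\<in>Pow (locs V d). E B}" by auto
  then have "noise_prob \<gamma> V d E = (\<Sum>B\<in>{B\<in>Pow (locs V d). E B}.
      \<gamma> ^ card B * (1 - \<gamma>) ^ (card (locs V d) - card B))"
    unfolding noise_prob_def by simp
  also have "\<dots> = (\<Sum>B\<in>Pow (locs V d).
      if E B then \<gamma> ^ card B * (1 - \<gamma>) ^ (card (locs V d) - card B) else 0)"
    by (rule sum.inter_filter) (simp add: finite_locs[OF assms])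
  finally show ?thesis .
qed

lemma noise_prob_le_1:
  assumes "finite V" "0 \<le> \<gamma>" "\<gamma> \<le> 1"
  shows "noise_prob \<gamma> V d E \<le> 1"
proof -
  have "noise_prob \<gamma> V d E \<le> (\<Sum>B\<in>Pow (locs V d). \<gamma> ^ card B * (1 - \<gamma>) ^ (card (locs V d) - card B))"
    unfolding noise_prob_def using assms finite_locs[OF assms(1)] by (intro sum_mono2) auto
  also have "\<dots> = 1" using sum_Pow_binomial[OF finite_locs[OF assms(1)], of \<gamma> "1 - \<gamma>"] by simp
  finally show ?thesis .
qed

lemma noise_prob_union_bound:
  assumes "finite V" "finite I" "0 \<le> \<gamma>" "\<gamma> \<le> 1"
    and "\<And>B. B \<subseteq> locs V d \<Longrightarrow> E B \<Longrightarrow> \<exists>i\<in>I. F i B"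
  shows "noise_prob \<gamma> V d E \<le> (\<Sum>i\<in>I. noise_prob \<gamma> V d (F i))"
proof -
  let ?w = "\<lambda>B. \<gamma> ^ card B * (1 - \<gamma>) ^ (card (locs V d) - card B)"
  have w0: "0 \<le> ?w B" for B using assms(3,4) by simp
  have "(if E B then ?w B else 0) \<le> (\<Sum>i\<in>I. if F i B then ?w B else 0)" if "B \<in> Pow (locs V d)" for B
  proof (cases "E B")
    case True
    have "B \<subseteq> locs V d" using that by simp
    then obtain i where i: "i \<in> I" "F i B" using assms(5) True by blast
    have "(if F i B then ?w B else 0) \<le> (\<Sum>i\<in>I. if F i B then ?w B else 0)"
      using assms(2) i(1) w0 by (intro member_le_sum) auto
    then show ?thesis using True i by simp
  next
    case False
    have "0 \<le> (\<Sum>i\<in>I. if F i B then ?w B else 0)" using assms(3,4) by (intro sum_nonneg) simp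
    then show ?thesis using False by simp
  qed
  then have "noise_prob \<gamma> V d E \<le> (\<Sum>B\<in>Pow (locs V d). \<Sum>i\<in>I. if F i B then ?w B else 0)"
    unfolding noise_prob_eq_sum_Pow[OF assms(1)] by (rule sum_mono)
  also have "\<dots> = (\<Sum>i\<in>I. \<Sum>B\<in>Pow (locs V d). if F i B then ?w B else 0)"
    by (rule sum.swap)
  also have "\<dots> = (\<Sum>i\<in>I. noise_prob \<gamma> V d (F i))"
    by (simp add: noise_prob_eq_sum_Pow[OF assms(1)])
  finally show ?thesis .
qed

lemma noise_prob_avoid:
  assumes "finite V" "F \<subseteq> locs V d"
  shows "noise_prob \<gamma> V d (\<lambda>B. B \<inter> F = {}) = (1 - \<gamma>) ^ card F"
proof -
  let ?L = "locs V d"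
  have fin: "finite ?L" "finite F"
    using finite_locs[OF assms(1)] finite_subset[OF assms(2)] by auto
  have card_L: "card ?L = card F + card (?L - F)"
    using fin assms(2) by (metis card_Diff_subset card_mono le_add_diff_inverse)
  have "{B. B \<subseteq> ?L \<and> B \<inter> F = {}} = Pow (?L - F)" by auto
  then have "noise_prob \<gamma> V d (\<lambda>B. B \<inter> F = {}) =
      (\<Sum>B\<in>Pow (?L - F). \<gamma> ^ card B * (1 - \<gamma>) ^ (card ?L - card B))"
    unfolding noise_prob_def by simp
  also have "\<dots> = (\<Sum>B\<in>Pow (?L - F).
      (1 - \<gamma>) ^ card F * (\<gamma> ^ card B * (1 - \<gamma>) ^ (card (?L - F) - card B)))"
  proof (rule sum.cong)
    fix B assume "B \<in> Pow (?L - F)"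
    then have "card B \<le> card (?L - F)" using fin by (simp add: card_mono)
    then have "card ?L - card B = card F + (card (?L - F) - card B)" using card_L by simp
    then show "\<gamma> ^ card B * (1 - \<gamma>) ^ (card ?L - card B) =
        (1 - \<gamma>) ^ card F * (\<gamma> ^ card B * (1 - \<gamma>) ^ (card (?L - F) - card B))"
      by (simp add: power_add)
  qed simp
  also have "\<dots> = (1 - \<gamma>) ^ card F"
    using sum_Pow_binomial[of "?L - F" \<gamma> "1 - \<gamma>"] fin by (simp add: sum_distrib_left[symmetric])
  finally show ?thesis .
qed

definition paulis_on :: "site set \<Rightarrow> pauli set" where
  "paulis_on R = {s. pauli_on R s}"

lemma supp_subset_if_pauli_on: "pauli_on R s \<Longrightarrow> supp s \<subseteq> R"
  by (auto simp: pauli_on_def supp_def)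

lemma paulis_on_insert:
  assumes "v \<notin> R"
  shows "paulis_on (insert v R) = (\<lambda>(p, s). s(v := p)) ` (UNIV \<times> paulis_on R)"
    and "inj_on (\<lambda>(p, s). s(v := p)) (UNIV \<times> paulis_on R)"
proof -
  have off_v: "s v = I1" if "s \<in> paulis_on R" for s
    using that assms by (auto simp: paulis_on_def pauli_on_def)
  show "paulis_on (insert v R) = (\<lambda>(p, s). s(v := p)) ` (UNIV \<times> paulis_on R)"
  proof (intro set_eqI iffI)
    fix s assume "s \<in> paulis_on (insert v R)"
    then have "s(v := I1) \<in> paulis_on R" by (auto simp: paulis_on_def pauli_on_def)
    then show "s \<in> (\<lambda>(p, s). s(v := p)) ` (UNIV \<times> paulis_on R)"
      by (intro image_eqI[of _ _ "(s v, _)"]) auto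
  qed (auto simp: paulis_on_def pauli_on_def)
  show "inj_on (\<lambda>(p, s). s(v := p)) (UNIV \<times> paulis_on R)"
    using off_v by (auto simp: inj_on_def fun_eq_iff) (metis fun_upd_apply)+
qed

lemma card_supp_fun_upd:
  assumes "finite (supp s)" "s v = I1"
  shows "card (supp (s(v := p))) = card (supp s) + of_bool (p \<noteq> I1)"
proof -
  have "supp (s(v := p)) = (if p = I1 then supp s else insert v (supp s))"
    using assms(2) by (auto simp: supp_def)
  moreover have "v \<notin> supp s" using assms(2) by (simp add: supp_def)
  ultimately show ?thesis using assms(1) by simp
qed

lemma paulis_on_weight_sum:
  fixes z :: real
  assumes "finite R"
  shows "finite (paulis_on R) \<and> (\<Sum>s\<in>paulis_on R. z ^ card (supp s)) = (1 + 3 * z) ^ card R"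
  using assms
proof (induction R rule: finite_induct)
  case empty
  have "paulis_on {} = {\<lambda>_. I1}" by (auto simp: paulis_on_def pauli_on_def)
  moreover have "supp (\<lambda>_. I1) = {}" by (simp add: supp_def)
  ultimately show ?case by simp
next
  case (insert v R)
  note eq = paulis_on_insert[OF insert.hyps(2)]
  have weight: "card (supp (s(v := p))) = card (supp s) + of_bool (p \<noteq> I1)"
    if "s \<in> paulis_on R" for s p
    using that insert.hyps finite_subset[OF supp_subset_if_pauli_on]
    by (intro card_supp_fun_upd) (auto simp: paulis_on_def pauli_on_def)
  have "(\<Sum>s\<in>paulis_on (insert v R). z ^ card (supp s))
      = (\<Sum>(p, s)\<in>UNIV \<times> paulis_on R. z ^ card (supp (s(v := p))))"
    unfolding eq(1) sum.reindex[OF eq(2)] by (simp add: case_prod_beta)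
  also have "\<dots> = (\<Sum>p\<in>UNIV. \<Sum>s\<in>paulis_on R. (if p = I1 then 1 else z) * z ^ card (supp s))"
    by (subst sum.cartesian_product[symmetric]) (auto simp: weight power_add intro!: sum.cong)
  also have "\<dots> = (\<Sum>p\<in>UNIV. (if p = I1 then 1 else z) * (1 + 3 * z) ^ card R)"
    using insert.IH by (simp add: sum_distrib_left[symmetric])
  also have "\<dots> = (1 + 3 * z) ^ card (insert v R)"
  proof -
    have p1_UNIV: "(UNIV :: p1 set) = {(False, False), (False, True), (True, False), (True, True)}"
      by auto
    show ?thesis unfolding p1_UNIV using insert.hyps by (simp add: algebra_simps)
  qed
  finally show ?case using eq(1) insert.IH by simp
qed

text \<open>Tilting by phi^(K |supp s| - k): operators of weight at least k / K cost at most a fraction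
  phi^(-k) of the weight generating function at x phi^K.\<close>
lemma sum_power_supp_tilted_le:
  fixes x phi :: real
  assumes "finite R" "A \<subseteq> paulis_on R" "0 \<le> x" "1 \<le> phi"
    and "\<And>s. s \<in> A \<Longrightarrow> k \<le> K * card (supp s)"
  shows "(\<Sum>s\<in>A. x ^ card (supp s)) \<le> (1 + 3 * (x * phi ^ K)) ^ card R / phi ^ k"
proof -
  have "x ^ card (supp s) \<le> (x * phi ^ K) ^ card (supp s) / phi ^ k" if "s \<in> A" for s
  proof -
    have "phi ^ k \<le> (phi ^ K) ^ card (supp s)"
      using power_increasing[OF assms(5)[OF that] assms(4)] by (simp add: power_mult)
    then have "x ^ card (supp s) * phi ^ k \<le> x ^ card (supp s) * (phi ^ K) ^ card (supp s)"
      using assms(3) by (intro mult_left_mono) auto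
    then show ?thesis using assms(4) by (simp add: field_simps power_mult_distrib)
  qed
  then have "(\<Sum>s\<in>A. x ^ card (supp s)) \<le> (\<Sum>s\<in>A. (x * phi ^ K) ^ card (supp s) / phi ^ k)"
    by (rule sum_mono)
  also have "\<dots> \<le> (\<Sum>s\<in>paulis_on R. (x * phi ^ K) ^ card (supp s) / phi ^ k)"
    using paulis_on_weight_sum[OF assms(1)] assms by (intro sum_mono2) auto
  also have "\<dots> = (1 + 3 * (x * phi ^ K)) ^ card R / phi ^ k"
    using paulis_on_weight_sum[OF assms(1)] by (simp add: sum_divide_distrib[symmetric])
  finally show ?thesis .
qed

section \<open>Counting connected sets of sublattices\<close>

definition walks :: "nat list set \<Rightarrow> nat \<Rightarrow> nat list list set" where
  "walks C0 m = {W. length W = Suc m \<and> hd W \<in> C0 \<and> successively (cheb_close 1) W}"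

lemma successively_cheb_close_length:
  "successively (cheb_close r) W \<Longrightarrow> x \<in> set W \<Longrightarrow> length x = length (hd W)"
  by (induction W rule: induct_list012) (auto simp: cheb_close_def)

lemma walks_Suc_subset:
  "walks C0 (Suc m) \<subseteq> (\<Union>W\<in>walks C0 m. (\<lambda>y. W @ [y]) ` {y. cheb_close 1 (last W) y})"
proof
  fix W' assume W': "W' \<in> walks C0 (Suc m)"
  define W where "W = butlast W'"
  have len: "length W' = Suc (Suc m)" using W' by (simp add: walks_def)
  then have "W' \<noteq> []" by auto
  then have W'_eq: "W' = W @ [last W']" unfolding W_def by simp
  have len_W: "length W = Suc m" using len unfolding W_def by simp
  have "hd W' = hd W" using len_W by (subst W'_eq) (cases W, auto)
  moreover have "successively (cheb_close 1) (W @ [last W'])"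
    using W' W'_eq unfolding walks_def by simp
  then have "successively (cheb_close 1) W" "cheb_close 1 (last W) (last W')"
    using len_W unfolding successively_append_iff by auto
  ultimately have "W \<in> walks C0 m" "cheb_close 1 (last W) (last W')"
    using W' len_W unfolding walks_def by auto
  then show "W' \<in> (\<Union>W\<in>walks C0 m. (\<lambda>y. W @ [y]) ` {y. cheb_close 1 (last W) y})"
    using W'_eq by blast
qed

lemma card_walks_le:
  assumes "finite C0" "\<forall>c\<in>C0. length c = D"
  shows "finite (walks C0 m) \<and> card (walks C0 m) \<le> card C0 * (3 ^ D) ^ m"
proof (induction m)
  case 0
  have "walks C0 0 = (\<lambda>c. [c]) ` C0"
    by (auto simp: walks_def length_Suc_conv)
  then show ?case using assms(1) by (simp add: card_image_le)
next
  case (Suc m)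
  let ?ext = "\<lambda>W. (\<lambda>y. W @ [y]) ` {y. cheb_close 1 (last W) y}"
  note sub = walks_Suc_subset[of C0 m]
  have ext: "finite (?ext W) \<and> card (?ext W) \<le> 3 ^ D" if "W \<in> walks C0 m" for W
  proof -
    have "W \<noteq> []" using that by (auto simp: walks_def)
    then have "length (last W) = D"
      using successively_cheb_close_length[of 1 W "last W"] that assms(2) by (auto simp: walks_def)
    then show ?thesis
      using card_cheb_close_1_le[of "last W"] by (meson card_image_le finite_imageI order_trans)
  qed
  have "card (walks C0 (Suc m)) \<le> card (\<Union>W\<in>walks C0 m. ?ext W)"
    using sub Suc ext by (intro card_mono) auto
  also have "\<dots> \<le> (\<Sum>W\<in>walks C0 m. card (?ext W))" using Suc by (intro card_UN_le) simp
  also have "\<dots> \<le> card (walks C0 m) * 3 ^ D"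
    using ext sum_bounded_above[of "walks C0 m" "\<lambda>W. card (?ext W)" "3 ^ D"] by simp
  also have "\<dots> \<le> card C0 * (3 ^ D) ^ Suc m" using Suc by simp
  finally show ?case using sub Suc ext finite_subset by blast
qed

lemma rtrancl_exit_edge:
  assumes "(x, z) \<in> R\<^sup>*" "x \<in> X" "z \<notin> X"
  shows "\<exists>a b. (a, b) \<in> R \<and> a \<in> X \<and> b \<notin> X"
  using assms by (induction rule: rtrancl_induct) blast+

text \<open>Depth-first growth: splicing the detour a, b, a into a walk through a adds the new
  vertex b at the cost of two steps.\<close>
lemma connected_walk_grow:
  assumes "finite S" "r \<in> S" "\<forall>y\<in>S. (r, y) \<in> Rel\<^sup>*"
    and "\<And>a b. (a, b) \<in> Rel \<Longrightarrow> b \<in> S \<and> P a b \<and> P b a"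
    and "m < card S"
  shows "\<exists>W. W \<noteq> [] \<and> hd W = r \<and> set W \<subseteq> S \<and> card (set W) = Suc m \<and>
             length W \<le> 2 * m + 1 \<and> successively P W"
  using assms(5)
proof (induction m)
  case 0
  show ?case using assms(2) by (intro exI[of _ "[r]"]) auto
next
  case (Suc m)
  then obtain W where W: "W \<noteq> []" "hd W = r" "set W \<subseteq> S" "card (set W) = Suc m"
      "length W \<le> 2 * m + 1" "successively P W" by auto
  have "set W \<noteq> S" using W(4) Suc.prems by auto
  then obtain z where "z \<in> S" "z \<notin> set W" using W(3) by blast
  moreover have "r \<in> set W" using W(1,2) by (metis list.set_sel(1))
  ultimately obtain a b where ab: "(a, b) \<in> Rel" "a \<in> set W" "b \<notin> set W"
    using rtrancl_exit_edge[of r z Rel "set W"] assms(3) by auto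
  have b: "b \<in> S" "P a b" "P b a" using assms(4)[OF ab(1)] by auto
  obtain W1 W2 where W_eq: "W = W1 @ a # W2" using split_list[OF ab(2)] by blast
  define W' where "W' = W1 @ a # b # a # W2"
  have "successively P W1" "successively P (a # W2)" "W1 = [] \<or> P (last W1) a"
    using W(6) W_eq successively_append_iff[of P W1 "a # W2"] by auto
  then have "successively P W'"
    using b unfolding W'_def by (auto simp: successively_append_iff)
  moreover have "hd W' = r" using W(2) W_eq unfolding W'_def by (cases W1) auto
  moreover have "set W' = insert b (set W)" using W_eq unfolding W'_def by auto
  moreover have "length W' = length W + 2" using W_eq unfolding W'_def by simp
  ultimately show ?case using W ab(3) b(1) assms(1) finite_subset
    by (intro exI[of _ W']) (auto simp: card_insert_if)
qed

lemma connected_subs_walk: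
  assumes "connected_subs V d S" "card S = k" "1 \<le> k"
  shows "\<exists>W\<in>walks (sub d ` V) (2 * (k - 1)). set W = S"
proof -
  have fin: "finite S" using assms(2,3) by (metis card.infinite not_one_le_zero)
  have "S \<noteq> {}" using assms(2,3) by auto
  then obtain r where r: "r \<in> S" by blast
  let ?Rel = "{(a, b). a \<in> S \<and> b \<in> S \<and> adjG a b}"
  have reach: "\<forall>y\<in>S. (r, y) \<in> ?Rel\<^sup>*" using assms(1) r by (simp add: connected_subs_def)
  have rel: "b \<in> S \<and> cheb_close 1 a b \<and> cheb_close 1 b a" if "(a, b) \<in> ?Rel" for a b
    using that adjG_imp_cheb_close cheb_close_sym by blast
  have "k - 1 < card S" using assms(2,3) by simp
  then obtain W where W: "W \<noteq> []" "hd W = r" "set W \<subseteq> S" "card (set W) = Suc (k - 1)"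
      "length W \<le> 2 * (k - 1) + 1" "successively (cheb_close 1) W"
    using connected_walk_grow[OF fin r reach rel] by blast
  have set_W: "set W = S" using W(3,4) fin assms(2,3) card_subset_eq[OF fin W(3)] by simp
  define W' where "W' = W @ replicate (2 * k - 1 - length W) (last W)"
  have "successively (cheb_close 1) (replicate n (last W))" for n
  proof (induction n)
    case (Suc n) then show ?case by (cases n) (auto simp: cheb_close_refl)
  qed simp
  moreover have "replicate n (last W) = [] \<or> hd (replicate n (last W)) = last W" for n
    by (cases n) auto
  ultimately have "successively (cheb_close 1) W'"
    using W(6) unfolding W'_def by (metis successively_append_iff cheb_close_refl)
  moreover have "length W' = Suc (2 * (k - 1))" using W(1,5) assms(3) unfolding W'_def by auto
  moreover have "hd W' \<in> sub d ` V" using W(1,2) r assms(1) unfolding W'_def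
    by (auto simp: connected_subs_def)
  moreover have "set W' = S" using W(1) set_W unfolding W'_def by auto
  ultimately show ?thesis unfolding walks_def by blast
qed

lemma card_connected_subs_le:
  assumes "finite V" "\<forall>v\<in>V. length v = D" "1 \<le> k"
  shows "finite {S. connected_subs V d S \<and> card S = k} \<and>
         card {S. connected_subs V d S \<and> card S = k} \<le> card V * (3 ^ D) ^ (2 * (k - 1))"
proof -
  let ?W = "walks (sub d ` V) (2 * (k - 1))"
  have labels: "finite (sub d ` V)" "\<forall>c\<in>sub d ` V. length c = D"
    using assms by (auto simp: sub_def)
  have sub: "{S. connected_subs V d S \<and> card S = k} \<subseteq> set ` ?W"
    using connected_subs_walk[OF _ _ assms(3)] by blast
  have W: "finite ?W" "card ?W \<le> card (sub d ` V) * (3 ^ D) ^ (2 * (k - 1))"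
    using card_walks_le[OF labels] by auto
  have "card {S. connected_subs V d S \<and> card S = k} \<le> card (set ` ?W)"
    using sub W(1) by (intro card_mono) auto
  also have "\<dots> \<le> card (sub d ` V) * (3 ^ D) ^ (2 * (k - 1))"
    using W card_image_le[OF W(1), of set] by linarith
  also have "\<dots> \<le> card V * (3 ^ D) ^ (2 * (k - 1))" using assms(1) by (simp add: card_image_le)
  finally show ?thesis using sub W(1) finite_subset by blast
qed

section \<open>Survival of the operators in T_k\<close>

lemma commute_pX:
  assumes "i \<in> V" shows "commute V q (pX i) \<longleftrightarrow> \<not> snd (q i)"
proof -
  have "{v\<in>V. anticomm1 (q v) (pX i v)} = (if snd (q i) then {i} else {})"
    using assms by (auto simp: pX_def anticomm1_def)
  then show ?thesis by (simp add: commute_def)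
qed

lemma commute_pZ:
  assumes "i \<in> V" shows "commute V q (pZ i) \<longleftrightarrow> \<not> fst (q i)"
proof -
  have "{v\<in>V. anticomm1 (q v) (pZ i v)} = (if fst (q i) then {i} else {})"
    using assms by (auto simp: pZ_def anticomm1_def)
  then show ?thesis by (simp add: commute_def)
qed

definition fatal_locs :: "(nat \<Rightarrow> layer) \<Rightarrow> nat \<Rightarrow> pauli \<Rightarrow> (site \<times> nat) set" where
  "fatal_locs U d s = {(i, t). t \<in> {1..d} \<and> i \<in> supp (schrod U t s)}"

lemma Pi_M_survivor_avoids_fatal_locs:
  assumes "finite V" "valid_circuit V d U" "B \<subseteq> locs V d"
    and "Pi_M V (Mset U B) s \<noteq> None"
  shows "B \<inter> fatal_locs U d s = {}"
proof (rule ccontr)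
  assume "B \<inter> fatal_locs U d s \<noteq> {}"
  then obtain i t where it: "(i, t) \<in> B" "t \<in> {1..d}" "i \<in> supp (schrod U t s)"
    by (auto simp: fatal_locs_def)
  have i: "i \<in> V" using it(1) assms(3) by (auto simp: locs_def)
  have valid: "valid_circuit V d U" "t \<le> d" using assms(2) it(2) by auto
  have "heis U t (pX i) \<in> Mset U B" "heis U t (pZ i) \<in> Mset U B"
    using it(1) unfolding Mset_def by auto
  then have "commute V s (heis U t (pX i))" "commute V s (heis U t (pZ i))"
    using assms(4) by (simp_all add: Pi_M_def split: if_splits)
  moreover have "heis U t (schrod U t s) = s" by (rule heis_schrod[OF valid])
  ultimately have "commute V (schrod U t s) (pX i)" "commute V (schrod U t s) (pZ i)"
    using commute_heis[OF assms(1) valid] by metis+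
  then have "schrod U t s i = I1"
    using commute_pX[OF i] commute_pZ[OF i] by (cases "schrod U t s i") simp
  then show False using it(3) by (simp add: supp_def)
qed

lemma card_fatal_locs:
  assumes "finite V" "valid_circuit V d U" "pauli_on V s"
  shows "fatal_locs U d s \<subseteq> locs V d"
    and "card (fatal_locs U d s) = (\<Sum>t\<in>{1..d}. card (supp (schrod U t s)))"
proof -
  have supp_V: "supp (schrod U t s) \<subseteq> V" if "t \<in> {1..d}" for t
    using assms(2,3) that by (intro supp_subset_if_pauli_on pauli_on_schrod) auto
  then show "fatal_locs U d s \<subseteq> locs V d" by (auto simp: fatal_locs_def locs_def)
  have "fatal_locs U d s = (\<lambda>(t, i). (i, t)) ` (SIGMA t:{1..d}. supp (schrod U t s))"
    by (auto simp: fatal_locs_def)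
  moreover have "inj_on (\<lambda>(t, i). (i, t)) (SIGMA t:{1..d}. supp (schrod U t s))"
    by (auto simp: inj_on_def)
  ultimately have "card (fatal_locs U d s) = card (SIGMA t:{1..d}. supp (schrod U t s))"
    by (simp add: card_image)
  also have "\<dots> = (\<Sum>t\<in>{1..d}. card (supp (schrod U t s)))"
  proof (rule card_SigmaI)
    show "\<forall>t\<in>{1..d}. finite (supp (schrod U t s))" using supp_V assms(1) by (meson finite_subset)
  qed simp
  finally show "card (fatal_locs U d s) = (\<Sum>t\<in>{1..d}. card (supp (schrod U t s)))" .
qed

text \<open>The d layers contribute d copies of the lightest propagated operator.\<close>
lemma survival_prob_le_sum_layers:
  fixes \<gamma> :: real
  assumes "finite V" "valid_circuit V d U" "pauli_on V s" "0 \<le> \<gamma>" "\<gamma> \<le> 1" "1 \<le> d"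
  shows "(1 - \<gamma>) ^ card (fatal_locs U d s) \<le> (\<Sum>t\<in>{1..d}. ((1 - \<gamma>) ^ d) ^ card (supp (schrod U t s)))"
proof -
  let ?m = "\<lambda>t. card (supp (schrod U t s))"
  define \<mu> where "\<mu> = Min (?m ` {1..d})"
  have "\<mu> \<in> ?m ` {1..d}" unfolding \<mu>_def using assms(6) by (intro Min_in) auto
  then obtain t0 where t0: "t0 \<in> {1..d}" "?m t0 = \<mu>" by auto
  have "\<mu> \<le> ?m t" if "t \<in> {1..d}" for t unfolding \<mu>_def using that by simp
  then have "d * \<mu> \<le> (\<Sum>t\<in>{1..d}. ?m t)" using sum_bounded_below[of "{1..d}" \<mu> ?m] by simp
  then have "(1 - \<gamma>) ^ card (fatal_locs U d s) \<le> (1 - \<gamma>) ^ (d * \<mu>)"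
    using card_fatal_locs(2)[OF assms(1-3)] assms(4,5) by (intro power_decreasing) auto
  also have "\<dots> = ((1 - \<gamma>) ^ d) ^ ?m t0" using t0(2) by (simp add: power_mult)
  also have "\<dots> \<le> (\<Sum>t\<in>{1..d}. ((1 - \<gamma>) ^ d) ^ ?m t)"
    using t0(1) assms(5) by (intro member_le_sum) auto
  finally show ?thesis .
qed

lemma noise_prob_survival_le:
  fixes \<gamma> :: real
  assumes "finite V" "valid_circuit V d U" "T \<subseteq> paulis_on V" "0 \<le> \<gamma>" "\<gamma> \<le> 1" "1 \<le> d"
  shows "noise_prob \<gamma> V d (\<lambda>B. \<exists>s\<in>T. Pi_M V (Mset U B) s \<noteq> None)
           \<le> (\<Sum>s\<in>T. \<Sum>t\<in>{1..d}. ((1 - \<gamma>) ^ d) ^ card (supp (schrod U t s)))"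
proof -
  have "finite (paulis_on V)" using paulis_on_weight_sum[OF assms(1)] by blast
  then have T: "finite T" using assms(3) by (rule finite_subset[rotated])
  have on_V: "pauli_on V s" if "s \<in> T" for s using that assms(3) by (auto simp: paulis_on_def)
  have "noise_prob \<gamma> V d (\<lambda>B. \<exists>s\<in>T. Pi_M V (Mset U B) s \<noteq> None)
      \<le> (\<Sum>s\<in>T. noise_prob \<gamma> V d (\<lambda>B. B \<inter> fatal_locs U d s = {}))"
  proof (rule noise_prob_union_bound[OF assms(1) T assms(4,5)])
    fix B assume "B \<subseteq> locs V d" "\<exists>s\<in>T. Pi_M V (Mset U B) s \<noteq> None"
    then show "\<exists>s\<in>T. B \<inter> fatal_locs U d s = {}"
      using Pi_M_survivor_avoids_fatal_locs[OF assms(1,2)] by blast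
  qed
  also have "\<dots> = (\<Sum>s\<in>T. (1 - \<gamma>) ^ card (fatal_locs U d s))"
    using card_fatal_locs(1)[OF assms(1,2) on_V] noise_prob_avoid[OF assms(1)] by simp
  also have "\<dots> \<le> (\<Sum>s\<in>T. \<Sum>t\<in>{1..d}. ((1 - \<gamma>) ^ d) ^ card (supp (schrod U t s)))"
    using survival_prob_le_sum_layers[OF assms(1,2) on_V assms(4-6)] by (rule sum_mono)
  finally show ?thesis .
qed

definition anchored :: "site set \<Rightarrow> nat \<Rightarrow> nat \<Rightarrow> nat list set \<Rightarrow> pauli set" where
  "anchored V d k S = {s\<in>paulis_on V. supp s \<subseteq> \<Union> (cube V d ` S) \<and>
       real (card {c\<in>S. supp s \<inter> cube V d c \<noteq> {}}) \<ge> real k / 2}"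

lemma T_set_eq_Union_anchored:
  "T_set V d k = (\<Union>S\<in>{S. connected_subs V d S \<and> card S = k}. anchored V d k S)"
  unfolding T_set_def anchored_def paulis_on_def by blast

definition near_cubes :: "nat \<Rightarrow> nat \<Rightarrow> nat \<Rightarrow> nat list set \<Rightarrow> site set" where
  "near_cubes D L d S = (\<Union>c\<in>S. {w\<in>box D L. cheb_close 1 c (sub d w)})"

lemma card_near_cubes_le:
  assumes "1 \<le> d" "finite S" "\<forall>c\<in>S. length c = D"
  shows "card (near_cubes D L d S) \<le> card S * (6 * d) ^ D"
proof -
  have "card (near_cubes D L d S) \<le> (\<Sum>c\<in>S. card {w\<in>box D L. cheb_close 1 c (sub d w)})"
    unfolding near_cubes_def using assms(2) by (rule card_UN_le)
  also have "\<dots> \<le> (\<Sum>c\<in>S. (6 * d) ^ D)"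
    using card_near_cube_le[OF assms(1)] assms(3) by (intro sum_mono) auto
  finally show ?thesis by simp
qed

lemma schrod_anchored_subset_near_cubes:
  assumes "valid_circuit (box D L) d U" "1 \<le> d" "t \<le> d" "s \<in> anchored (box D L) d k S"
  shows "schrod U t s \<in> paulis_on (near_cubes D L d S)"
proof -
  note valid = assms(1,3)
  have on_box: "pauli_on (box D L) (schrod U t s)"
    using assms(4) by (intro pauli_on_schrod[OF valid]) (auto simp: anchored_def paulis_on_def)
  have "w \<in> near_cubes D L d S" if w: "w \<in> supp (schrod U t s)" for w
  proof -
    obtain u where u: "u \<in> supp s" "cheb_close t u w"
      using w supp_schrod[OF valid] by (auto simp: nbhd_def)
    obtain c where "c \<in> S" "u \<in> cube (box D L) d c"
      using u(1) assms(4) by (auto simp: anchored_def)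
    moreover have "cheb_close 1 (sub d u) (sub d w)"
      using u(2) assms(2,3) by (intro cheb_close_sub) (auto intro: cheb_close_mono)
    ultimately show ?thesis
      using w supp_subset_if_pauli_on[OF on_box] by (auto simp: near_cubes_def cube_def)
  qed
  then show ?thesis using on_box by (auto simp: paulis_on_def pauli_on_def supp_def)
qed

text \<open>Each sublattice met by s lies next to the sublattice of some site of C_t s C_t^dag,
  since s = C_t^dag (C_t s C_t^dag) C_t spreads by at most t \<le> d.\<close>
lemma anchored_weight_schrod:
  assumes "valid_circuit (box D L) d U" "1 \<le> d" "t \<le> d" "s \<in> anchored (box D L) d k S"
  shows "k \<le> 2 * 3 ^ D * card (supp (schrod U t s))"
proof -
  let ?s' = "schrod U t s" and ?met = "{c\<in>S. supp s \<inter> cube (box D L) d c \<noteq> {}}"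
  let ?labels = "\<lambda>w. {c. cheb_close 1 (sub d w) c}"
  note valid = assms(1,3)
  have on_box: "pauli_on (box D L) ?s'"
    using assms(4) by (intro pauli_on_schrod[OF valid]) (auto simp: anchored_def paulis_on_def)
  then have fin: "finite (supp ?s')" using finite_box finite_subset supp_subset_if_pauli_on by blast
  have labels: "finite (?labels w) \<and> card (?labels w) \<le> 3 ^ D" if "w \<in> supp ?s'" for w
    using that card_cheb_close_1_le[of "sub d w"] supp_subset_if_pauli_on[OF on_box] length_box
    by (auto simp: sub_def)
  have "?met \<subseteq> (\<Union>w\<in>supp ?s'. ?labels w)"
  proof
    fix c assume "c \<in> ?met"
    then obtain u where u: "u \<in> supp s" "u \<in> cube (box D L) d c" by auto
    have "u \<in> nbhd t (supp ?s')"
      using supp_heis[OF valid, where s = ?s'] heis_schrod[OF valid] u(1) by auto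
    then obtain w where w: "w \<in> supp ?s'" "cheb_close t w u" by (auto simp: nbhd_def)
    have "cheb_close 1 (sub d w) (sub d u)"
      using w(2) assms(2,3) by (intro cheb_close_sub) (auto intro: cheb_close_mono)
    then show "c \<in> (\<Union>w\<in>supp ?s'. ?labels w)" using w(1) u(2) by (auto simp: cube_def)
  qed
  then have "card ?met \<le> card (\<Union>w\<in>supp ?s'. ?labels w)"
    using fin labels by (intro card_mono) auto
  also have "\<dots> \<le> (\<Sum>w\<in>supp ?s'. card (?labels w))" using fin by (rule card_UN_le)
  also have "\<dots> \<le> card (supp ?s') * 3 ^ D"
    using labels sum_bounded_above[of "supp ?s'" "\<lambda>w. card (?labels w)" "3 ^ D"] by simp
  finally have "card ?met \<le> card (supp ?s') * 3 ^ D" .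
  moreover have "real k / 2 \<le> real (card ?met)" using assms(4) by (simp add: anchored_def)
  ultimately show ?thesis by (simp add: algebra_simps)
qed

lemma sum_anchored_schrod_le:
  fixes x phi :: real
  assumes "valid_circuit (box D L) d U" "1 \<le> d" "t \<in> {1..d}"
    and "connected_subs (box D L) d S" "card S = k" "0 \<le> x" "1 \<le> phi"
  shows "(\<Sum>s\<in>anchored (box D L) d k S. x ^ card (supp (schrod U t s)))
           \<le> (1 + 3 * (x * phi ^ (2 * 3 ^ D))) ^ (k * (6 * d) ^ D) / phi ^ k"
proof -
  let ?A = "anchored (box D L) d k S" and ?R = "near_cubes D L d S"
  let ?y = "1 + 3 * (x * phi ^ (2 * 3 ^ D))"
  have valid: "valid_circuit (box D L) d U" "t \<le> d" using assms(1,3) by auto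
  have S: "finite S" "\<forall>c\<in>S. length c = D"
    using assms(4) finite_box[of D L] finite_subset
    by (auto simp: connected_subs_def sub_def box_def)
  have "?R \<subseteq> box D L" by (auto simp: near_cubes_def)
  then have R: "finite ?R" "card ?R \<le> k * (6 * d) ^ D"
    using finite_subset[OF _ finite_box] card_near_cubes_le[OF assms(2) S] assms(5) by auto
  have "(\<Sum>s\<in>?A. x ^ card (supp (schrod U t s))) = (\<Sum>s'\<in>schrod U t ` ?A. x ^ card (supp s'))"
    using inj_schrod[OF valid] by (simp add: sum.reindex inj_on_subset)
  also have "\<dots> \<le> ?y ^ card ?R / phi ^ k"
  proof (rule sum_power_supp_tilted_le[OF R(1) _ assms(6,7)])
    show "schrod U t ` ?A \<subseteq> paulis_on ?R"
      using schrod_anchored_subset_near_cubes[OF assms(1,2)] assms(3) by auto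
    show "k \<le> 2 * 3 ^ D * card (supp s')" if "s' \<in> schrod U t ` ?A" for s'
      using that anchored_weight_schrod[OF assms(1,2)] assms(3) by auto
  qed
  also have "\<dots> \<le> ?y ^ (k * (6 * d) ^ D) / phi ^ k"
    using R(2) assms(6,7) by (intro divide_right_mono power_increasing) auto
  finally show ?thesis .
qed

lemma noise_prob_T_set_le:
  fixes \<gamma> phi :: real
  assumes "valid_circuit (box D L) d U" "1 \<le> d" "0 \<le> \<gamma>" "\<gamma> \<le> 1" "1 \<le> phi" "1 \<le> k"
  shows "noise_prob \<gamma> (box D L) d (\<lambda>B. \<exists>s\<in>T_set (box D L) d k. Pi_M (box D L) (Mset U B) s \<noteq> None)
     \<le> real (card (box D L) * (3 ^ D) ^ (2 * (k - 1))) *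
         (real d * ((1 + 3 * ((1 - \<gamma>) ^ d * phi ^ (2 * 3 ^ D))) ^ (k * (6 * d) ^ D) / phi ^ k))"
proof -
  let ?V = "box D L" and ?SS = "{S. connected_subs (box D L) d S \<and> card S = k}"
  let ?x = "(1 - \<gamma>) ^ d"
  let ?f = "\<lambda>s. \<Sum>t\<in>{1..d}. ?x ^ card (supp (schrod U t s))"
  let ?bound = "(1 + 3 * (?x * phi ^ (2 * 3 ^ D))) ^ (k * (6 * d) ^ D) / phi ^ k"
  have SS: "finite ?SS" "card ?SS \<le> card ?V * (3 ^ D) ^ (2 * (k - 1))"
    using card_connected_subs_le[OF finite_box _ assms(6)] length_box by blast+
  have "finite (paulis_on ?V)" using paulis_on_weight_sum[OF finite_box] by blast
  then have anchored: "finite (anchored ?V d k S)" "anchored ?V d k S \<subseteq> paulis_on ?V" for S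
    unfolding anchored_def by (auto intro: finite_subset)
  have "noise_prob \<gamma> ?V d (\<lambda>B. \<exists>s\<in>T_set ?V d k. Pi_M ?V (Mset U B) s \<noteq> None)
      \<le> (\<Sum>s\<in>T_set ?V d k. ?f s)"
    using anchored(2) unfolding T_set_eq_Union_anchored
    by (intro noise_prob_survival_le[OF finite_box assms(1) _ assms(3-4,2)]) blast
  also have "\<dots> \<le> (\<Sum>S\<in>?SS. \<Sum>s\<in>anchored ?V d k S. ?f s)"
    unfolding T_set_eq_Union_anchored using SS(1) anchored(1) assms(4)
    by (intro sum_UN_le_sum_sum) (auto intro: sum_nonneg)
  also have "\<dots> = (\<Sum>S\<in>?SS. \<Sum>t\<in>{1..d}. \<Sum>s\<in>anchored ?V d k S. ?x ^ card (supp (schrod U t s)))"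
    by (intro sum.cong refl sum.swap)
  also have "\<dots> \<le> (\<Sum>S\<in>?SS. \<Sum>t\<in>{1..d}. ?bound)"
    using sum_anchored_schrod_le[OF assms(1,2) _ _ _ _ assms(5)] assms(4)
    by (intro sum_mono) auto
  also have "\<dots> = real (card ?SS) * (real d * ?bound)" by simp
  also have "\<dots> \<le> real (card ?V * (3 ^ D) ^ (2 * (k - 1))) * (real d * ?bound)"
    using SS(2) assms(4,5) by (intro mult_right_mono) (simp_all only: of_nat_le_iff, auto)
  finally show ?thesis .
qed

section \<open>The depth threshold\<close>

lemma real_le_power: "2 \<le> (b::real) \<Longrightarrow> real n \<le> b ^ n"
proof -
  assume "2 \<le> b"
  have "real n < 2 ^ n" using less_exp[of n] by (metis of_nat_less_iff of_nat_numeral of_nat_power)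
  also have "(2::real) ^ n \<le> b ^ n" using \<open>2 \<le> b\<close> by (intro power_mono) auto
  finally show ?thesis by simp
qed

lemma nine_le_exp_4: "9 \<le> exp (4::real)"
proof -
  have "3 \<le> exp (2::real)" using exp_ge_add_one_self[of 2] by simp
  then have "3 * 3 \<le> exp (2::real) * exp 2" by (intro mult_mono) auto
  also have "\<dots> = exp 4" by (simp flip: exp_add)
  finally show ?thesis by simp
qed

lemma one_plus_power_le_exp:
  fixes y :: real
  assumes "0 \<le> y" "real N * y \<le> z"
  shows "(1 + y) ^ N \<le> exp z"
proof -
  have "(1 + y) ^ N \<le> exp y ^ N" using assms(1) by (intro power_mono) auto
  also have "\<dots> = exp (real N * y)" by (simp add: exp_of_nat_mult)
  also have "\<dots> \<le> exp z" using assms(2) by simp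
  finally show ?thesis .
qed

lemma ln_le_linear:
  fixes a d :: real
  assumes "1 \<le> a" "92 * a + 4 * (a * ln a) \<le> d"
  shows "ln (6 * d) \<le> d / (2 * a)"
proof -
  have d: "0 < d" using assms by (smt (verit) ln_ge_zero mult_nonneg_nonneg)
  text \<open>Split 6d = 24a (d / 4a) and use ln y \<le> y - 1 on both factors.\<close>
  have "ln (6 * d) = ln 24 + ln a + ln (d / (4 * a))"
    using assms(1) d by (simp add: ln_mult_pos[symmetric] field_simps)
  also have "\<dots> \<le> 23 + ln a + (d / (4 * a) - 1)"
    using ln_le_minus_one[of 24] ln_le_minus_one[of "d / (4 * a)"] assms(1) d by simp
  also have "\<dots> \<le> d / (2 * a)"
  proof -
    have "4 * a * (23 + ln a) \<le> d" using assms by (simp add: algebra_simps)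
    then have "23 + ln a \<le> d / (4 * a)" using assms(1) by (simp add: field_simps)
    then show ?thesis by (simp add: field_simps)
  qed
  finally show ?thesis .
qed

lemma depth_threshold_estimate:
  fixes \<gamma> :: real and D d :: nat
  assumes "1 \<le> D" "0 < \<gamma>" "\<gamma> \<le> 1"
    and depth: "real d > 100 * (3 ^ (2 * D) / \<gamma> + real D / \<gamma> * ln (real D / \<gamma>))"
  shows "ln 3 + (2 + 4 * real D) * (2 * 3 ^ D) + real D * ln (6 * real d) \<le> \<gamma> * real d"
proof -
  define a where "a = real D / \<gamma>"
  have a: "1 \<le> a" "0 \<le> ln a" "0 \<le> a * ln a" unfolding a_def using assms(1-3) by (simp_all add: field_simps)
  have depth': "real d > 100 * (9 ^ D / \<gamma> + a * ln a)"
    using depth unfolding a_def by (simp add: power_mult)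
  have "\<gamma> * (100 * (9 ^ D / \<gamma> + a * ln a)) = 100 * (9 ^ D + real D * ln a)"
    using assms(2) unfolding a_def by (simp add: field_simps)
  then have gamma_d: "\<gamma> * real d > 100 * (9 ^ D + real D * ln a)"
    using depth' assms(2) by (metis mult_strict_left_mono)
  have "ln (3::real) \<le> 9 ^ D"
    using ln_le_minus_one[of 3] power_increasing[of 1 D "9::real"] assms(1) by simp
  moreover have "(2 + 4 * real D) * (2 * 3 ^ D) \<le> 12 * 9 ^ D"
  proof -
    have "(2 + 4 * real D) * (2 * 3 ^ D) \<le> 12 * real D * 3 ^ D" using assms(1) by (simp add: algebra_simps)
    also have "\<dots> \<le> 12 * 3 ^ D * 3 ^ D" using real_le_power[of 3 D] by simp
    also have "\<dots> = 12 * 9 ^ D" by (simp add: power_mult_distrib[symmetric])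
    finally show ?thesis .
  qed
  moreover have "real D * ln (6 * real d) \<le> \<gamma> * real d / 2"
  proof -
    have "a \<le> 9 ^ D / \<gamma>" unfolding a_def using real_le_power[of 9 D] assms(2) by (simp add: divide_right_mono)
    then have "92 * a + 4 * (a * ln a) \<le> real d" using depth' a unfolding distrib_left by linarith
    then have "real D * ln (6 * real d) \<le> real D * (real d / (2 * a))"
      using ln_le_linear[OF a(1)] by (intro mult_left_mono) auto
    also have "\<dots> = \<gamma> * real d / 2" unfolding a_def using assms(1,2) by (simp add: field_simps)
    finally show ?thesis .
  qed
  moreover have "0 \<le> real D * ln a" "0 \<le> (9::real) ^ D" using a by simp_all
  ultimately show ?thesis using gamma_d unfolding distrib_left by linarith
qed

lemma depth_threshold_pos:
  fixes \<gamma> :: real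
  assumes "1 \<le> D" "0 < \<gamma>" "\<gamma> \<le> 1"
    and "real d > 100 * (3 ^ (2 * D) / \<gamma> + real D / \<gamma> * ln (real D / \<gamma>))"
  shows "1 \<le> d"
proof -
  have "0 \<le> real D / \<gamma> * ln (real D / \<gamma>)" using assms(1-3) by (simp add: field_simps)
  moreover have "(0::real) < 3 ^ (2 * D) / \<gamma>" using assms(2) by simp
  ultimately show ?thesis using assms(4) by (smt (verit) of_nat_0 less_one not_le)
qed

lemma depth_threshold_base_le_1:
  fixes \<gamma> :: real and D d :: nat
  assumes "1 \<le> D" "0 < \<gamma>" "\<gamma> \<le> 1"
    and "real d > 100 * (3 ^ (2 * D) / \<gamma> + real D / \<gamma> * ln (real D / \<gamma>))"
  shows "3 * ((1 - \<gamma>) ^ d * exp (2 + 4 * real D) ^ (2 * 3 ^ D)) * (6 * real d) ^ D \<le> 1"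
proof -
  have d: "0 < real d" using depth_threshold_pos[OF assms] by simp
  have "(1 - \<gamma>) ^ d \<le> exp (- \<gamma>) ^ d"
    using assms(3) exp_ge_add_one_self[of "- \<gamma>"] by (intro power_mono) auto
  then have "3 * ((1 - \<gamma>) ^ d * exp (2 + 4 * real D) ^ (2 * 3 ^ D)) * (6 * real d) ^ D
        \<le> 3 * (exp (- \<gamma>) ^ d * exp (2 + 4 * real D) ^ (2 * 3 ^ D)) * (6 * real d) ^ D"
    using d by (intro mult_right_mono mult_left_mono) auto
  also have "\<dots> = exp (ln 3 + (2 + 4 * real D) * (2 * 3 ^ D) + real D * ln (6 * real d) - \<gamma> * real d)"
  proof -
    have "exp (- \<gamma>) ^ d = exp (- (\<gamma> * real d))"
      by (simp add: exp_of_nat_mult[symmetric] algebra_simps)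
    moreover have "exp (2 + 4 * real D) ^ (2 * 3 ^ D) = exp ((2 + 4 * real D) * (2 * 3 ^ D))"
      by (simp add: exp_of_nat_mult[symmetric] algebra_simps)
    moreover have "(6 * real d) ^ D = exp (real D * ln (6 * real d))"
      using d by (simp add: exp_of_nat_mult)
    moreover have "(3::real) = exp (ln 3)" by simp
    ultimately show ?thesis by (simp only:) (simp add: exp_add exp_diff exp_minus field_simps)
  qed
  also have "\<dots> \<le> 1" using depth_threshold_estimate[OF assms] by simp
  finally show ?thesis .
qed

text \<open>With phi = e^(2 + 4D), the factor phi^(-k) absorbs the 9^(Dk) connected sets and the
  e^k left by the weight sum, leaving e^(-k).\<close>
lemma union_bound_le_exp:
  fixes \<gamma> :: real and D d n :: nat
  assumes "1 \<le> D" "0 < \<gamma>" "\<gamma> \<le> 1"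
    and "real d > 100 * (3 ^ (2 * D) / \<gamma> + real D / \<gamma> * ln (real D / \<gamma>))"
  defines "phi \<equiv> exp (2 + 4 * real D)"
  shows "real (n * (3 ^ D) ^ (2 * (k - 1))) *
           (real d * ((1 + 3 * ((1 - \<gamma>) ^ d * phi ^ (2 * 3 ^ D))) ^ (k * (6 * d) ^ D) / phi ^ k))
         \<le> real (n * d) * exp (- real k)"
proof -
  have "((3::real) ^ D) ^ (2 * (k - 1)) = ((3 ^ D) ^ 2) ^ (k - 1)" by (simp only: power_mult)
  also have "((3::real) ^ D) ^ 2 = 9 ^ D" by (simp add: power_mult_distrib[symmetric] power2_eq_square)
  also have "(9 ^ D) ^ (k - 1) \<le> (9::real) ^ (D * k)"
    by (simp only: power_mult[symmetric]) (intro power_increasing, auto)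
  also have "\<dots> \<le> exp 4 ^ (D * k)" using nine_le_exp_4 by (intro power_mono) auto
  finally have count: "real ((3 ^ D) ^ (2 * (k - 1))) \<le> exp (4 * real D * real k)"
    by (simp add: exp_of_nat_mult[symmetric] algebra_simps)
  define y where "y = 3 * ((1 - \<gamma>) ^ d * phi ^ (2 * 3 ^ D))"
  have y: "0 \<le> y" "y * (6 * real d) ^ D \<le> 1"
    using assms(3) depth_threshold_base_le_1[OF assms(1-4)] by (simp_all add: y_def phi_def)
  have "real (k * (6 * d) ^ D) * y \<le> real k"
    using y(2) mult_left_mono[OF y(2), of "real k"] by (simp add: algebra_simps)
  then have "(1 + y) ^ (k * (6 * d) ^ D) \<le> exp (real k)"
    by (rule one_plus_power_le_exp[OF y(1)])
  moreover have "phi ^ k = exp ((2 + 4 * real D) * real k)"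
    unfolding phi_def by (simp add: exp_of_nat_mult[symmetric] algebra_simps)
  ultimately have per_set: "real d * ((1 + y) ^ (k * (6 * d) ^ D) / phi ^ k)
      \<le> real d * (exp (real k) / exp ((2 + 4 * real D) * real k))"
    by (simp add: divide_right_mono mult_left_mono)
  have sets: "real (n * (3 ^ D) ^ (2 * (k - 1))) \<le> real n * exp (4 * real D * real k)"
    using count by (simp add: mult_left_mono)
  have "0 \<le> real d * ((1 + y) ^ (k * (6 * d) ^ D) / phi ^ k)"
    using y(1) by (simp add: phi_def)
  then have "real (n * (3 ^ D) ^ (2 * (k - 1))) * (real d * ((1 + y) ^ (k * (6 * d) ^ D) / phi ^ k))
      \<le> real n * exp (4 * real D * real k) * (real d * (exp (real k) / exp ((2 + 4 * real D) * real k)))"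
    by (intro mult_mono[OF sets per_set]) auto
  also have "\<dots> = real (n * d) * exp (- real k)"
    by (simp add: exp_add[symmetric] exp_diff[symmetric] algebra_simps)
  finally show ?thesis unfolding y_def .
qed

theorem lemma8:
  "\<exists>c::real. \<forall>(D::nat) (L::nat) (d::nat) (U::nat \<Rightarrow> layer) (\<gamma>::real) (k::nat).
     1 \<le> D \<longrightarrow> 1 \<le> L \<longrightarrow> 0 < \<gamma> \<longrightarrow> \<gamma> \<le> 1 \<longrightarrow> valid_circuit (box D L) d U \<longrightarrow>
     real d > c * (3 ^ (2 * D) / \<gamma> + real D / \<gamma> * ln (real D / \<gamma>)) \<longrightarrow>
     noise_prob \<gamma> (box D L) d
        (\<lambda>B. \<exists>s\<in>T_set (box D L) d k. Pi_M (box D L) (Mset U B) s \<noteq> None)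
       \<le> real (card (box D L) * d) * exp (- real k)"
proof (intro exI[of _ 100] allI impI)
  fix D L d :: nat and U :: "nat \<Rightarrow> layer" and \<gamma> :: real and k :: nat
  assume D: "1 \<le> D" and L: "1 \<le> L" and \<gamma>: "0 < \<gamma>" "\<gamma> \<le> 1"
    and U: "valid_circuit (box D L) d U"
    and depth: "real d > 100 * (3 ^ (2 * D) / \<gamma> + real D / \<gamma> * ln (real D / \<gamma>))"
  let ?E = "\<lambda>B. \<exists>s\<in>T_set (box D L) d k. Pi_M (box D L) (Mset U B) s \<noteq> None"
  have d: "1 \<le> d" by (rule depth_threshold_pos[OF D \<gamma> depth])
  show "noise_prob \<gamma> (box D L) d ?E \<le> real (card (box D L) * d) * exp (- real k)"
  proof (cases "k = 0")
    case True
    have "1 \<le> card (box D L) * d" using card_box_pos[OF L] d by simp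
    then have "1 \<le> real (card (box D L) * d)" by (metis of_nat_1 of_nat_le_iff)
    moreover have "noise_prob \<gamma> (box D L) d ?E \<le> 1" using noise_prob_le_1[OF finite_box] \<gamma> by simp
    ultimately show ?thesis using True by simp
  next
    case False
    let ?phi = "exp (2 + 4 * real D)"
    have "noise_prob \<gamma> (box D L) d ?E \<le> real (card (box D L) * (3 ^ D) ^ (2 * (k - 1))) *
        (real d * ((1 + 3 * ((1 - \<gamma>) ^ d * ?phi ^ (2 * 3 ^ D))) ^ (k * (6 * d) ^ D) / ?phi ^ k))"
      using False \<gamma> by (intro noise_prob_T_set_le[OF U d]) auto
    also have "\<dots> \<le> real (card (box D L) * d) * exp (- real k)"
      by (rule union_bound_le_exp[OF D \<gamma> depth])
    finally show ?thesis .
  qed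
qed

end
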